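(* Let $R$ be an associative ring with unity, $\sigma$ an endomorphism of $R$ and $\delta$ a $\sigma$-derivation of $R$. Assume $R$ is right p.q.-Baer and $R$ satisfies one of the following: (i) $R$ is $(\sigma,\delta)$-skew Armendariz and satisfies $(\mathcal{C}_\sigma)$; (ii) $\mathcal{S}_\ell(R)=\mathcal{B}(R)$, $\sigma(Re)\subseteq Re$ for all $e\in\mathcal{B}(R)$, and $R$ satisfies $(\mathcal{C}_\sigma)$; (iii) $R$ is $\sigma$-rigid. Then the Ore extension $R[x;\sigma,\delta]$ is right p.q.-Baer.
   Context: A $\sigma$-derivation is an additive map $\delta$ with $\delta(ab)=\sigma(a)\delta(b)+\delta(a)b$. $R[x;\sigma,\delta]$ is the ring of polynomials $\sum a_ix^i$ (coefficients on the left) with $xa=\sigma(a)x+\delta(a)$. $R$ is $(\sigma,\delta)$-skew Armendariz if whenever $p=\sum_{i=0}^n a_ix^i$, $q=\sum_{j=0}^m b_jx^j\in R[x;\sigma,\delta]$ satisfy $pq=0$, then $a_ix^ib_jx^j=0$ in $R[x;\sigma,\delta]$ for all $i,j$. $R$ satisfies $(\mathcal{C}_\sigma)$ if $a\sigma(b)=0$ implies $ab=0$ for all $a,b\in R$. $\mathcal{S}_\ell(R)$ is the set of idempotents $e$ with $ere=re$ for all $r$; $\mathcal{B}(R)$ is the set of central idempotents. $R$ is $\sigma$-rigid if $a\sigma(a)=0$ implies $a=0$. A ring $T$ is right p.q.-Baer if for every $a\in T$ the right annihilator $\{t\in T\mid aTt=0\}$ is generated as a right ideal by an idempotent. *)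

theory Defs
  imports "HOL-Computational_Algebra.Polynomial"
begin

text \<open>Elements of the Ore extension R[x;sigma,delta] are represented by their
coefficient sequences, i.e. p = sum_i (coeff p i) x^i with coefficients on the left.
The type 'a poly is used only as a container of finitely supported coefficient
sequences (its own multiplication is NOT used).\<close>

definition ring_endo :: "('a::ring_1 \<Rightarrow> 'a) \<Rightarrow> bool" where
  "ring_endo \<sigma> \<longleftrightarrow> (\<forall>a b. \<sigma> (a + b) = \<sigma> a + \<sigma> b) \<and> (\<forall>a b. \<sigma> (a * b) = \<sigma> a * \<sigma> b) \<and> \<sigma> 1 = 1"

definition sigma_derivation :: "('a::ring_1 \<Rightarrow> 'a) \<Rightarrow> ('a \<Rightarrow> 'a) \<Rightarrow> bool" where
  "sigma_derivation \<sigma> \<delta> \<longleftrightarrow> (\<forall>a b. \<delta> (a + b) = \<delta> a + \<delta> b) \<and>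
     (\<forall>a b. \<delta> (a * b) = \<sigma> a * \<delta> b + \<delta> a * b)"

text \<open>xpow_mult sigma delta i b is the element x^i * b written in normal form
(sum of c_k x^k), using x a = sigma(a) x + delta(a).\<close>
fun xpow_mult :: "('a::ring_1 \<Rightarrow> 'a) \<Rightarrow> ('a \<Rightarrow> 'a) \<Rightarrow> nat \<Rightarrow> 'a \<Rightarrow> 'a poly" where
  "xpow_mult \<sigma> \<delta> 0 b = [:b:]"
| "xpow_mult \<sigma> \<delta> (Suc i) b =
     (let q = xpow_mult \<sigma> \<delta> i b in pCons 0 (map_poly \<sigma> q) + map_poly \<delta> q)"

text \<open>Multiplication in R[x;sigma,delta]:
 (sum a_i x^i)(sum b_j x^j) = sum_{i,j} a_i (x^i b_j) x^j.\<close>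
definition ore_mult :: "('a::ring_1 \<Rightarrow> 'a) \<Rightarrow> ('a \<Rightarrow> 'a) \<Rightarrow> 'a poly \<Rightarrow> 'a poly \<Rightarrow> 'a poly" where
  "ore_mult \<sigma> \<delta> p q =
     (\<Sum>i\<le>degree p. \<Sum>j\<le>degree q.
        (pCons 0 ^^ j) (map_poly (\<lambda>c. coeff p i * c) (xpow_mult \<sigma> \<delta> i (coeff q j))))"

definition right_pq_baer :: "('b::zero \<Rightarrow> 'b \<Rightarrow> 'b) \<Rightarrow> 'b set \<Rightarrow> bool" where
  "right_pq_baer mul T \<longleftrightarrow>
     (\<forall>a\<in>T. \<exists>e\<in>T. mul e e = e \<and>
        {t\<in>T. \<forall>s\<in>T. mul (mul a s) t = 0} = {mul e r | r. r \<in> T})"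

definition skew_armendariz :: "('a::ring_1 \<Rightarrow> 'a) \<Rightarrow> ('a \<Rightarrow> 'a) \<Rightarrow> bool" where
  "skew_armendariz \<sigma> \<delta> \<longleftrightarrow>
     (\<forall>p q. ore_mult \<sigma> \<delta> p q = 0 \<longrightarrow>
        (\<forall>i j. ore_mult \<sigma> \<delta> (monom (coeff p i) i) (monom (coeff q j) j) = 0))"

definition cond_C :: "('a::ring_1 \<Rightarrow> 'a) \<Rightarrow> bool" where
  "cond_C \<sigma> \<longleftrightarrow> (\<forall>a b. a * \<sigma> b = 0 \<longrightarrow> a * b = 0)"

definition S_left :: "'a::ring_1 set" where
  "S_left = {e. e * e = e \<and> (\<forall>r. e * r * e = r * e)}"

definition B_central :: "'a::ring_1 set" where
  "B_central = {e. e * e = e \<and> (\<forall>r. e * r = r * e)}"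

definition sigma_rigid :: "('a::ring_1 \<Rightarrow> 'a) \<Rightarrow> bool" where
  "sigma_rigid \<sigma> \<longleftrightarrow> (\<forall>a. a * \<sigma> a = 0 \<longrightarrow> a = 0)"

end

theory Submission
  imports Defs
begin

text \<open>Each of (i)--(iii) yields \<open>(\<C>\<^sub>\<sigma>)\<close> together with
\<open>\<S>\<^sub>\<ell>(R) \<subseteq> \<B>(R)\<close>, and only these two facts are used.
In a right p.q.-Baer ring the right annihilator of \<open>aR\<close> is \<open>eR\<close> for a left
semicentral, hence central, idempotent \<open>e\<close>; intersecting finitely many such ideals gives
a central idempotent \<open>e\<close> with \<open>r.ann(c\<^sub>0R) \<inter> \<dots> \<inter> r.ann(c\<^sub>nR) = eR\<close> for the
coefficients \<open>c\<^sub>i\<close> of a polynomial \<open>p\<close>. By \<open>(\<C>\<^sub>\<sigma>)\<close> such \<open>e\<close> satisfies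
\<open>\<sigma>(e) = e\<close> and \<open>\<delta>(e) = 0\<close>, so it commutes with \<open>x\<close>. Finally
\<open>p R[x;\<sigma>,\<delta>] q = 0\<close> forces \<open>c\<^sub>i R d\<^sub>j = 0\<close> for all coefficients \<open>d\<^sub>j\<close> of \<open>q\<close>:
comparing top coefficients and using \<open>(\<C>\<^sub>\<sigma>)\<close> gives this for the leading ones,
and splitting with the central annihilator idempotent \<open>f\<close> of the leading coefficient of
\<open>p\<close> as \<open>p = pf + p(1-f)\<close>, \<open>q = fq + (1-f)q\<close> lowers \<open>deg p + deg q\<close>.\<close>

subsection \<open>Idempotents and annihilators\<close>

lemma S_leftD:
  assumes "e \<in> S_left"
  shows "e * e = e" "e * r * e = r * e"
  using assms unfolding S_left_def mem_Collect_eq by blast+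

lemma B_centralD:
  assumes "e \<in> B_central"
  shows "e * e = e" "e * r = r * e"
  using assms unfolding B_central_def mem_Collect_eq by blast+

lemma B_central_subset_S_left: "B_central \<subseteq> (S_left :: 'a::ring_1 set)"
proof
  fix e :: 'a assume e: "e \<in> B_central"
  have "e * r * e = r * e" for r
    using B_centralD[OF e] by (metis mult.assoc)
  then show "e \<in> S_left" using B_centralD(1)[OF e] unfolding S_left_def by blast
qed

lemma one_minus_B_central: "e \<in> B_central \<Longrightarrow> 1 - (e::'a::ring_1) \<in> B_central"
proof -
  assume e: "e \<in> B_central"
  have "(1 - e) * (1 - e) = 1 - e"
    by (simp add: algebra_simps B_centralD(1)[OF e])
  moreover have "(1 - e) * r = r * (1 - e)" for r
    by (simp add: algebra_simps B_centralD(2)[OF e, of r])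
  ultimately show ?thesis unfolding B_central_def by blast
qed

lemma mult_B_central: "e \<in> B_central \<Longrightarrow> f \<in> B_central \<Longrightarrow> e * (f::'a::ring_1) \<in> B_central"
proof -
  assume e: "e \<in> B_central" and f: "f \<in> B_central"
  have "e * f * (e * f) = e * f"
    by (metis B_centralD[OF e] B_centralD[OF f] mult.assoc)
  moreover have "e * f * r = r * (e * f)" for r
    by (metis B_centralD(2)[OF e] B_centralD(2)[OF f] mult.assoc)
  ultimately show ?thesis unfolding B_central_def by blast
qed

lemma idem_principal_right_ideal_iff:
  fixes e :: "'a::ring_1"
  assumes "e * e = e"
  shows "(\<exists>r. t = e * r) \<longleftrightarrow> e * t = t"
  using assms by (metis mult.assoc)

lemma B_central_mult_fixes_iff:
  fixes e f :: "'a::ring_1"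
  assumes "e \<in> B_central" "f \<in> B_central"
  shows "e * f * t = t \<longleftrightarrow> e * t = t \<and> f * t = t"
  using B_centralD[OF assms(1)] B_centralD[OF assms(2)] by (metis mult.assoc)

lemma idem_S_leftI:
  fixes e :: "'a::ring_1"
  assumes "e * e = e" and "\<And>r. \<exists>s. r * e = e * s"
  shows "e \<in> S_left"
  unfolding S_left_def
proof (intro CollectI conjI allI assms(1))
  fix r
  obtain s where s: "r * e = e * s" using assms(2) by blast
  have "e * r * e = (e * e) * s" by (simp add: mult.assoc s)
  then show "e * r * e = r * e" by (simp add: s assms(1))
qed

lemma right_pq_baerD:
  fixes a :: "'a::ring_1"
  assumes "right_pq_baer (*) (UNIV :: 'a set)"
  obtains e where "e * e = e" "\<And>t. (\<forall>s. a * s * t = 0) \<longleftrightarrow> e * t = t"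
proof -
  have "\<exists>e\<in>UNIV. e * e = e \<and> {t \<in> UNIV. \<forall>s\<in>UNIV. a * s * t = 0} = {e * r |r. r \<in> UNIV}"
    using assms unfolding right_pq_baer_def by (rule bspec) simp
  then obtain e where ee: "e * e = e"
    and ann: "{t \<in> UNIV. \<forall>s\<in>UNIV. a * s * t = 0} = {e * r |r. r \<in> UNIV}"
    by (elim bexE conjE)
  have "(\<forall>s. a * s * t = 0) \<longleftrightarrow> (\<exists>r. t = e * r)" for t
    using ann by (simp add: set_eq_iff)
  then show ?thesis using that[OF ee] idem_principal_right_ideal_iff[OF ee] by blast
qed

lemma right_pq_baer_annihilator_central:
  fixes a :: "'a::ring_1"
  assumes pq: "right_pq_baer (*) (UNIV :: 'a set)" and SB: "S_left \<subseteq> (B_central :: 'a set)"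
  shows "\<exists>e\<in>B_central. \<forall>t. (\<forall>s. a * s * t = 0) \<longleftrightarrow> e * t = t"
proof -
  obtain e where ee: "e * e = e" and iff: "\<And>t. (\<forall>s. a * s * t = 0) \<longleftrightarrow> e * t = t"
    using right_pq_baerD[OF pq] by blast
  have "e \<in> S_left"
  proof (rule idem_S_leftI[OF ee])
    fix r
    have "\<forall>s. a * s * e = 0" using iff[of e] ee by simp
    have "a * s * (r * e) = 0" for s
    proof -
      have "a * s * (r * e) = a * (s * r) * e" by (simp only: mult.assoc)
      then show ?thesis using \<open>\<forall>s. a * s * e = 0\<close> by simp
    qed
    then have "e * (r * e) = r * e" using iff by blast
    then show "\<exists>s. r * e = e * s" by (intro exI[of _ "r * e"]) simp
  qed
  then show ?thesis using SB iff by blast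
qed

lemma right_pq_baer_annihilator_central_finite:
  fixes a :: "nat \<Rightarrow> 'a::ring_1"
  assumes pq: "right_pq_baer (*) (UNIV :: 'a set)" and SB: "S_left \<subseteq> (B_central :: 'a set)"
  shows "\<exists>e\<in>B_central. \<forall>t. (\<forall>i\<le>n. \<forall>s. a i * s * t = 0) \<longleftrightarrow> e * t = t"
proof (induction n)
  case 0
  then show ?case using right_pq_baer_annihilator_central[OF pq SB, of "a 0"] by simp
next
  case (Suc n)
  obtain e where eB: "e \<in> B_central" and e: "\<And>t. (\<forall>i\<le>n. \<forall>s. a i * s * t = 0) \<longleftrightarrow> e * t = t"
    using Suc.IH by blast
  obtain f where fB: "f \<in> B_central" and f: "\<And>t. (\<forall>s. a (Suc n) * s * t = 0) \<longleftrightarrow> f * t = t"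
    using right_pq_baer_annihilator_central[OF pq SB] by blast
  have "(\<forall>i\<le>Suc n. \<forall>s. a i * s * t = 0) \<longleftrightarrow> e * f * t = t" for t
    using e[of t] f[of t] B_central_mult_fixes_iff[OF eB fB] by (auto simp: le_Suc_eq)
  then show ?case using mult_B_central[OF eB fB] by blast
qed

lemma cond_C_funpow:
  assumes C: "cond_C \<sigma>" and "a * (\<sigma>^^n) b = 0"
  shows "a * b = 0"
  using assms(2)
proof (induction n arbitrary: b)
  case (Suc n)
  have "a * (\<sigma>^^n) (\<sigma> b) = 0" using Suc.prems by (simp only: funpow_Suc_right o_def)
  then have "a * \<sigma> b = 0" by (rule Suc.IH)
  then show ?case using C unfolding cond_C_def by blast
qed simp

lemma reduced_mult_commute_zero:
  fixes x y :: "'a::ring_1"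
  assumes reduced: "\<And>a::'a. a * a = 0 \<Longrightarrow> a = 0" and "x * y = 0"
  shows "y * x = 0"
proof -
  have "(y * x) * (y * x) = y * (x * y) * x" by (simp add: mult.assoc)
  then have "(y * x) * (y * x) = 0" using assms(2) by simp
  then show ?thesis by (rule reduced)
qed

lemma reduced_S_left_subset_B_central:
  assumes reduced: "\<And>a::'a::ring_1. a * a = 0 \<Longrightarrow> a = 0"
  shows "S_left \<subseteq> (B_central :: 'a set)"
proof
  fix e :: 'a assume eS: "e \<in> S_left"
  have "e * r = r * e" for r
  proof -
    have "(1 - e) * e = 0" by (simp add: left_diff_distrib S_leftD(1)[OF eS])
    have "(e * r * (1 - e)) * (e * r * (1 - e)) = e * r * ((1 - e) * e) * r * (1 - e)"
      by (simp only: mult.assoc)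
    also have "\<dots> = 0" using \<open>(1 - e) * e = 0\<close> by simp
    finally have "e * r * (1 - e) = 0" by (rule reduced)
    then have "e * r = e * r * e" by (simp add: right_diff_distrib)
    then show ?thesis using S_leftD(2)[OF eS, of r] by (rule trans)
  qed
  then show "e \<in> B_central" using S_leftD(1)[OF eS] unfolding B_central_def by blast
qed

subsection \<open>The Ore product\<close>

definition lmult :: "'a::ring_1 \<Rightarrow> 'a poly \<Rightarrow> 'a poly" where
  "lmult a q = map_poly (\<lambda>c. a * c) q"

definition rmult :: "'a::ring_1 \<Rightarrow> 'a poly \<Rightarrow> 'a poly" where
  "rmult a q = map_poly (\<lambda>c. c * a) q"

lemma coeff_lmult [simp]: "coeff (lmult a q) k = a * coeff q k"
  by (simp add: lmult_def coeff_map_poly)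

lemma coeff_rmult [simp]: "coeff (rmult a q) k = coeff q k * a"
  by (simp add: rmult_def coeff_map_poly)

lemma lmult_add: "lmult a (p + q) = lmult a p + lmult a q"
  by (rule poly_eqI) (simp add: distrib_left)

lemma lmult_add_left: "lmult (a + b) q = lmult a q + lmult b q"
  by (rule poly_eqI) (simp add: distrib_right)

lemma lmult_0 [simp]: "lmult a 0 = 0"
  by (rule poly_eqI) simp

lemma lmult_0_left [simp]: "lmult 0 q = 0"
  by (rule poly_eqI) simp

lemma lmult_lmult: "lmult a (lmult b q) = lmult (a * b) q"
  by (rule poly_eqI) (simp add: mult.assoc)

lemma lmult_sum: "lmult a (sum f A) = (\<Sum>i\<in>A. lmult a (f i))"
  using sum_comp_morphism[of "lmult a" f A] by (simp add: lmult_add o_def)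

lemma rmult_add: "rmult a (p + q) = rmult a p + rmult a q"
  by (rule poly_eqI) (simp add: distrib_right)

lemma rmult_0 [simp]: "rmult a 0 = 0"
  by (rule poly_eqI) simp

lemma rmult_sum: "rmult a (sum f A) = (\<Sum>i\<in>A. rmult a (f i))"
  using sum_comp_morphism[of "rmult a" f A] by (simp add: rmult_add o_def)

lemma rmult_lmult: "rmult e (lmult a q) = lmult a (rmult e q)"
  by (rule poly_eqI) (simp add: mult.assoc)

lemma rmult_eq_lmult_central: "(\<forall>r. e * r = r * e) \<Longrightarrow> rmult e q = lmult e q"
  by (rule poly_eqI) simp

lemma degree_lmult_le: "degree (lmult a q) \<le> degree q"
  by (rule degree_le) (simp add: coeff_eq_0)

lemma degree_rmult_le: "degree (rmult a q) \<le> degree q"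
  by (rule degree_le) (simp add: coeff_eq_0)

lemma lmult_pCons_0: "lmult a (pCons 0 q) = pCons 0 (lmult a q)"
  by (rule poly_eqI) (simp add: coeff_pCons split: nat.split)

lemma lmult_const: "lmult a [:b:] = [:a * b:]"
  by (rule poly_eqI) (simp add: coeff_pCons split: nat.split)

locale ore_extension =
  fixes \<sigma> \<delta> :: "'a::ring_1 \<Rightarrow> 'a"
  assumes endo: "ring_endo \<sigma>" and der: "sigma_derivation \<sigma> \<delta>"
begin

lemma sigma_add: "\<sigma> (a + b) = \<sigma> a + \<sigma> b"
  using endo by (simp add: ring_endo_def)

lemma sigma_mult: "\<sigma> (a * b) = \<sigma> a * \<sigma> b"
  using endo by (simp add: ring_endo_def)

lemma sigma_one [simp]: "\<sigma> 1 = 1"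
  using endo by (simp add: ring_endo_def)

lemma delta_add: "\<delta> (a + b) = \<delta> a + \<delta> b"
  using der by (simp add: sigma_derivation_def)

lemma delta_mult: "\<delta> (a * b) = \<sigma> a * \<delta> b + \<delta> a * b"
  using der by (simp add: sigma_derivation_def)

lemma sigma_0 [simp]: "\<sigma> 0 = 0"
  using sigma_add[of 0 0] by simp

lemma delta_0 [simp]: "\<delta> 0 = 0"
  using delta_add[of 0 0] by simp

lemma delta_one [simp]: "\<delta> 1 = 0"
  using delta_mult[of 1 1] by simp

lemma sigma_diff: "\<sigma> (a - b) = \<sigma> a - \<sigma> b"
  using sigma_add[of "a - b" b] by (simp add: eq_diff_eq)

lemma delta_diff: "\<delta> (a - b) = \<delta> a - \<delta> b"
  using delta_add[of "a - b" b] by (simp add: eq_diff_eq)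

definition xmult :: "'a poly \<Rightarrow> 'a poly" where
  "xmult q = pCons 0 (map_poly \<sigma> q) + map_poly \<delta> q"

lemma coeff_xmult:
  "coeff (xmult q) k = (if k = 0 then 0 else \<sigma> (coeff q (k - 1))) + \<delta> (coeff q k)"
  by (cases k) (simp_all add: xmult_def coeff_map_poly)

lemma xmult_add: "xmult (p + q) = xmult p + xmult q"
  by (rule poly_eqI) (simp add: coeff_xmult sigma_add delta_add algebra_simps)

lemma xmult_0 [simp]: "xmult 0 = 0"
  by (rule poly_eqI) (simp add: coeff_xmult)

lemma xmult_lmult: "xmult (lmult c q) = lmult (\<sigma> c) (xmult q) + lmult (\<delta> c) q"
  by (rule poly_eqI) (simp add: coeff_xmult sigma_mult delta_mult algebra_simps)

lemma degree_xmult_le: "degree (xmult q) \<le> Suc (degree q)"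
  by (rule degree_le) (simp add: coeff_xmult coeff_eq_0)

lemma xmult_pow_add: "(xmult^^i) (p + q) = (xmult^^i) p + (xmult^^i) q"
  by (induction i) (simp_all add: xmult_add)

lemma xmult_pow_0 [simp]: "(xmult^^i) 0 = 0"
  by (induction i) simp_all

lemma xmult_pow_sum: "(xmult^^i) (sum f A) = (\<Sum>j\<in>A. (xmult^^i) (f j))"
  using sum_comp_morphism[of "xmult^^i" f A] by (simp add: xmult_pow_add o_def)

lemma xmult_pow_shift: "(xmult^^i) ((pCons 0 ^^ j) q) = (pCons 0 ^^ j) ((xmult^^i) q)"
proof -
  have "xmult (pCons 0 q) = pCons 0 (xmult q)" for q
    by (rule poly_eqI) (simp add: coeff_xmult coeff_pCons split: nat.split)
  then have "(xmult^^i) (pCons 0 q) = pCons 0 ((xmult^^i) q)" for q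
    by (induction i) simp_all
  then show ?thesis by (induction j) simp_all
qed

lemma xpow_mult_eq: "xpow_mult \<sigma> \<delta> i b = (xmult^^i) [:b:]"
  by (induction i) (simp_all add: Let_def xmult_def)

definition omult :: "'a poly \<Rightarrow> 'a poly \<Rightarrow> 'a poly" (infixl \<open>\<star>\<close> 70) where
  "p \<star> q = (\<Sum>i\<le>degree p. lmult (coeff p i) ((xmult^^i) q))"

lemma omult_bound:
  assumes "degree p \<le> N"
  shows "p \<star> q = (\<Sum>i\<le>N. lmult (coeff p i) ((xmult^^i) q))"
  unfolding omult_def
  by (rule sum.mono_neutral_right[symmetric]) (use assms in \<open>auto simp: coeff_eq_0\<close>)

lemma ore_mult_eq_omult: "ore_mult \<sigma> \<delta> p q = p \<star> q"
proof -
  have shift_lmult: "(pCons 0 ^^ j) (lmult a q) = lmult a ((pCons 0 ^^ j) q)" for j a q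
    by (induction j) (simp_all add: lmult_pCons_0)
  have shift_const: "(pCons 0 ^^ j) [:b:] = monom b j" for j b
    by (induction j) (simp_all add: monom_Suc monom_0)
  have "ore_mult \<sigma> \<delta> p q = (\<Sum>i\<le>degree p. \<Sum>j\<le>degree q.
        lmult (coeff p i) ((xmult^^i) (monom (coeff q j) j)))"
    unfolding ore_mult_def lmult_def[symmetric] xpow_mult_eq
    by (simp add: shift_lmult xmult_pow_shift[symmetric] shift_const)
  also have "\<dots> = p \<star> q"
    by (simp add: omult_def lmult_sum[symmetric] xmult_pow_sum[symmetric] poly_as_sum_of_monoms)
  finally show ?thesis .
qed

lemma coeff_omult: "coeff (p \<star> q) k = (\<Sum>i\<le>degree p. coeff p i * coeff ((xmult^^i) q) k)"
  by (simp add: omult_def coeff_sum)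

lemma omult_const: "[:a:] \<star> q = lmult a q"
  by (simp add: omult_def)

lemma omult_linear: "[:a, b:] \<star> q = lmult a q + lmult b (xmult q)"
  by (subst omult_bound[of _ 1]) simp_all

lemma omult_add_left: "(u + v) \<star> q = u \<star> q + v \<star> q"
proof -
  define N where "N = max (degree u) (degree v)"
  have "degree (u + v) \<le> N" unfolding N_def by (rule degree_add_le) auto
  then show ?thesis
    by (simp add: omult_bound[of _ N] N_def lmult_add_left sum.distrib)
qed

lemma omult_0_left [simp]: "0 \<star> q = 0"
  by (simp add: omult_def)

lemma omult_sum_left: "sum f A \<star> q = (\<Sum>i\<in>A. f i \<star> q)"
  using sum_comp_morphism[of "\<lambda>u. u \<star> q" f A] by (simp add: omult_add_left o_def)

lemma omult_lmult_left: "lmult a u \<star> q = lmult a (u \<star> q)"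
proof -
  have "lmult a u \<star> q = (\<Sum>i\<le>degree u. lmult (coeff (lmult a u) i) ((xmult^^i) q))"
    by (rule omult_bound[OF degree_lmult_le])
  then show ?thesis by (simp add: omult_def lmult_sum lmult_lmult)
qed

lemma omult_xmult_left: "xmult u \<star> q = xmult (u \<star> q)"
proof -
  define N where "N = degree u"
  have shift: "(\<Sum>i\<le>Suc N. lmult (if i = 0 then 0 else \<sigma> (coeff u (i - 1))) ((xmult^^i) q))
      = (\<Sum>i\<le>N. lmult (\<sigma> (coeff u i)) ((xmult^^Suc i) q))"
    by (subst sum.atMost_Suc_shift) simp
  have top: "(\<Sum>i\<le>Suc N. lmult (\<delta> (coeff u i)) ((xmult^^i) q))
      = (\<Sum>i\<le>N. lmult (\<delta> (coeff u i)) ((xmult^^i) q))"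
    by (simp add: N_def coeff_eq_0)
  have "xmult u \<star> q = (\<Sum>i\<le>Suc N. lmult (coeff (xmult u) i) ((xmult^^i) q))"
    by (rule omult_bound) (use degree_xmult_le N_def in auto)
  also have "\<dots> = (\<Sum>i\<le>Suc N. lmult (if i = 0 then 0 else \<sigma> (coeff u (i - 1))) ((xmult^^i) q))
      + (\<Sum>i\<le>Suc N. lmult (\<delta> (coeff u i)) ((xmult^^i) q))"
    by (simp add: coeff_xmult lmult_add_left sum.distrib del: sum.atMost_Suc)
  also have "\<dots> = (\<Sum>i\<le>N. xmult (lmult (coeff u i) ((xmult^^i) q)))"
    by (simp only: shift top) (simp add: xmult_lmult sum.distrib)
  also have "\<dots> = xmult (u \<star> q)"
    using sum_comp_morphism[of xmult "\<lambda>i. lmult (coeff u i) ((xmult^^i) q)" "{..N}"]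
    by (simp add: xmult_add o_def omult_def N_def)
  finally show ?thesis .
qed

lemma omult_assoc: "p \<star> s \<star> q = p \<star> (s \<star> q)"
proof -
  have "(xmult^^i) u \<star> q = (xmult^^i) (u \<star> q)" for i u
    by (induction i) (simp_all add: omult_xmult_left)
  then show ?thesis
    unfolding omult_def[of p s] by (simp add: omult_sum_left omult_lmult_left omult_def[of p])
qed

subsection \<open>Central idempotents commute with the indeterminate\<close>

text \<open>\<open>v = (1 - e) \<sigma>(e)\<close> is an idempotent with \<open>v \<sigma>(v) = 0\<close>, so \<open>v = v\<^sup>2 = 0\<close>
by \<open>(\<C>\<^sub>\<sigma>)\<close>.\<close>
lemma S_left_sigma:
  assumes C: "cond_C \<sigma>" and e: "e \<in> S_left"
  shows "(1 - e) * \<sigma> e = 0"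
proof -
  have ee: "e * e = e" and sc': "(1 - e) * r * e = 0" for r
    using S_leftD(1)[OF e] S_leftD(2)[OF e, of r] by (simp_all add: algebra_simps)
  define v where "v = (1 - e) * \<sigma> e"
  have "\<sigma> e * \<sigma> (1 - e) = 0" by (simp flip: sigma_mult add: algebra_simps ee)
  then have "v * \<sigma> v = 0" unfolding v_def sigma_mult by (metis mult.assoc mult_zero_left mult_zero_right)
  then have "v * v = 0" using C unfolding cond_C_def by blast
  moreover have "v * v = v"
  proof -
    have "v * v = (1 - e) * \<sigma> e * \<sigma> e - ((1 - e) * \<sigma> e * e) * \<sigma> e"
      unfolding v_def by (simp add: algebra_simps)
    also have "(1 - e) * \<sigma> e * e = 0" by (rule sc')
    also have "(1 - e) * \<sigma> e * \<sigma> e = (1 - e) * \<sigma> e" by (simp flip: sigma_mult add: ee mult.assoc)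
    finally show ?thesis by (simp add: v_def)
  qed
  ultimately show ?thesis by (simp add: v_def)
qed

lemma S_left_delta:
  assumes C: "cond_C \<sigma>" and e: "e \<in> S_left"
  shows "(1 - e) * \<delta> e = 0"
proof -
  have "\<delta> e = \<sigma> e * \<delta> e + \<delta> e * e" using delta_mult[of e e] S_leftD(1)[OF e] by simp
  then have "(1 - e) * \<delta> e = ((1 - e) * \<sigma> e) * \<delta> e + (1 - e) * \<delta> e * e"
    by (metis distrib_left mult.assoc)
  also have "(1 - e) * \<delta> e * e = 0"
    using S_leftD(2)[OF e, of "\<delta> e"] by (simp add: algebra_simps)
  finally show ?thesis by (simp add: S_left_sigma[OF C e])
qed

lemma B_central_sigma_delta:
  assumes C: "cond_C \<sigma>" and e: "e \<in> B_central"
  shows "\<sigma> e = e" "\<delta> e = 0"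
proof -
  have e1: "e \<in> S_left" and e2: "1 - e \<in> S_left"
    using e one_minus_B_central B_central_subset_S_left by blast+
  have "e * (1 - \<sigma> e) = 0" using S_left_sigma[OF C e2] by (simp add: sigma_diff)
  moreover have "(1 - e) * \<sigma> e = 0" by (rule S_left_sigma[OF C e1])
  ultimately show "\<sigma> e = e" by (simp add: algebra_simps)
  have "e * \<delta> e = 0" using S_left_delta[OF C e2] by (simp add: delta_diff)
  moreover have "(1 - e) * \<delta> e = 0" by (rule S_left_delta[OF C e1])
  ultimately show "\<delta> e = 0" by (simp add: left_diff_distrib)
qed

lemma xmult_pow_rmult_fixed:
  assumes "\<sigma> e = e" "\<delta> e = 0"
  shows "(xmult^^i) (rmult e y) = rmult e ((xmult^^i) y)"
proof -
  have "xmult (rmult e y) = rmult e (xmult y)" for y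
    by (rule poly_eqI) (simp add: coeff_xmult sigma_mult delta_mult assms algebra_simps)
  then show ?thesis by (induction i) simp_all
qed

lemma xmult_pow_lmult_fixed:
  assumes "\<sigma> e = e" "\<delta> e = 0"
  shows "(xmult^^i) (lmult e y) = lmult e ((xmult^^i) y)"
  by (induction i) (simp_all add: xmult_lmult assms)

lemma omult_rmult_left:
  assumes "\<sigma> e = e" "\<delta> e = 0"
  shows "rmult e p \<star> y = p \<star> lmult e y"
proof -
  have "rmult e p \<star> y = (\<Sum>i\<le>degree p. lmult (coeff (rmult e p) i) ((xmult^^i) y))"
    by (rule omult_bound[OF degree_rmult_le])
  then show ?thesis by (simp add: omult_def xmult_pow_lmult_fixed[OF assms] lmult_lmult)
qed

lemma rmult_omult:
  assumes "\<sigma> e = e" "\<delta> e = 0"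
  shows "rmult e (p \<star> s) = p \<star> rmult e s"
  by (simp add: omult_def rmult_sum rmult_lmult xmult_pow_rmult_fixed[OF assms])

lemma coeff_xmult_pow_top:
  assumes "\<forall>k>m. coeff q k = 0"
  shows "(\<forall>k>m + i. coeff ((xmult^^i) q) k = 0) \<and> coeff ((xmult^^i) q) (m + i) = (\<sigma>^^i) (coeff q m)"
proof (induction i)
  case 0
  then show ?case using assms by simp
next
  case (Suc i)
  have "\<forall>k>m + Suc i. coeff ((xmult^^Suc i) q) k = 0"
  proof (intro allI impI)
    fix k assume "k > m + Suc i"
    then have "k - 1 > m + i" "k > m + i" "k \<noteq> 0" by auto
    then show "coeff ((xmult^^Suc i) q) k = 0" using Suc.IH by (simp add: coeff_xmult)
  qed
  moreover have "coeff ((xmult^^Suc i) q) (m + Suc i)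
      = \<sigma> (coeff ((xmult^^i) q) (m + i)) + \<delta> (coeff ((xmult^^i) q) (m + Suc i))"
    by (simp add: coeff_xmult)
  ultimately show ?case using Suc.IH by simp
qed

lemma coeff_omult_top:
  assumes "\<forall>k>m. coeff q k = 0"
  shows "coeff (p \<star> q) (degree p + m) = coeff p (degree p) * (\<sigma>^^degree p) (coeff q m)"
proof -
  have "coeff p i * coeff ((xmult^^i) q) (degree p + m) =
      (if i = degree p then coeff p (degree p) * (\<sigma>^^degree p) (coeff q m) else 0)"
    if "i \<le> degree p" for i
  proof (cases "i = degree p")
    case True
    then show ?thesis using coeff_xmult_pow_top[OF assms, of i] by (simp add: add.commute)
  next
    case False
    with that have "degree p + m > m + i" by auto
    then show ?thesis using coeff_xmult_pow_top[OF assms, of i] False by simp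
  qed
  then have "coeff (p \<star> q) (degree p + m) = (\<Sum>i\<le>degree p.
      if i = degree p then coeff p (degree p) * (\<sigma>^^degree p) (coeff q m) else 0)"
    unfolding coeff_omult by (intro sum.cong) simp_all
  then show ?thesis by simp
qed

subsection \<open>Annihilators in the Ore extension\<close>

lemma lead_coeffs_annihilate:
  assumes C: "cond_C \<sigma>" and ann: "\<And>r. p \<star> lmult r q = 0"
  shows "coeff p (degree p) * r * coeff q (degree q) = 0"
proof -
  have "coeff (p \<star> lmult r q) (degree p + degree q)
      = coeff p (degree p) * (\<sigma>^^degree p) (r * coeff q (degree q))"
    using coeff_omult_top[of "degree q" "lmult r q" p] by (simp add: coeff_eq_0)
  then have "coeff p (degree p) * (\<sigma>^^degree p) (r * coeff q (degree q)) = 0"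
    using ann by simp
  then have "coeff p (degree p) * (r * coeff q (degree q)) = 0" by (rule cond_C_funpow[OF C])
  then show ?thesis by (simp add: mult.assoc)
qed

text \<open>Induction on \<open>deg p + deg q\<close>: the central annihilator idempotent \<open>f\<close> of the
leading coefficient of \<open>p\<close> kills the top coefficient of \<open>pf\<close> and fixes that of \<open>q\<close>,
so \<open>pf\<close> and \<open>(1 - f)q\<close> have smaller degree.\<close>
lemma coeffs_annihilate:
  assumes C: "cond_C \<sigma>" and pq: "right_pq_baer (*) (UNIV :: 'a set)"
    and SB: "S_left \<subseteq> (B_central :: 'a set)"
  shows "(\<And>r. p \<star> lmult r q = 0) \<Longrightarrow> coeff p i * r * coeff q j = 0"
proof (induction "degree p + degree q" arbitrary: p q i j r rule: less_induct)
  case less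
  show ?case
  proof (cases "p = 0 \<or> q = 0")
    case True
    then show ?thesis by auto
  next
    case False
    define n m where "n = degree p" and "m = degree q"
    obtain f where fB: "f \<in> B_central"
      and f: "\<And>t. (\<forall>s. coeff p n * s * t = 0) \<longleftrightarrow> f * t = t"
      using right_pq_baer_annihilator_central[OF pq SB] by blast
    have ff: "f * f = f" and cf: "\<And>r. f * r = r * f" using B_centralD[OF fB] by blast+
    have pf: "coeff p n * f = 0" using f[of f] ff by (metis mult_1_right)
    have fq: "f * coeff q m = coeff q m"
      using f lead_coeffs_annihilate[OF C less.prems] n_def m_def by blast
    define p1 q1 where "p1 = rmult f p" and "q1 = lmult (1 - f) q"
    have "p1 = 0 \<or> degree p1 < n"
      by (rule eq_zero_or_degree_less) (use degree_rmult_le pf in \<open>auto simp: p1_def n_def\<close>)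
    moreover have "p1 \<star> lmult r q = 0" for r
      using less.prems[of "f * r"] B_central_sigma_delta[OF C fB]
      by (simp add: p1_def omult_rmult_left lmult_lmult)
    ultimately have c1: "coeff p1 i' * r' * coeff q j' = 0" for i' j' r'
      using less.hyps[of p1 q] n_def by fastforce
    have "q1 = 0 \<or> degree q1 < m"
      by (rule eq_zero_or_degree_less)
        (use degree_lmult_le fq in \<open>auto simp: q1_def m_def left_diff_distrib\<close>)
    moreover have "p \<star> lmult r q1 = 0" for r
      using less.prems[of "r * (1 - f)"] by (simp add: q1_def lmult_lmult)
    ultimately have c2: "coeff p i' * r' * coeff q1 j' = 0" for i' j' r'
      using less.hyps[of p q1] m_def by fastforce
    have "coeff p i * r * coeff q j
        = coeff p i * (r * f) * coeff q j + coeff p i * r * ((1 - f) * coeff q j)"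
      by (simp add: algebra_simps)
    also have "coeff p i * (r * f) * coeff q j = coeff p1 i * r * coeff q j"
      by (simp add: p1_def cf mult.assoc)
    also have "coeff p i * r * ((1 - f) * coeff q j) = coeff p i * r * coeff q1 j"
      by (simp add: q1_def)
    finally show ?thesis using c1 c2 by simp
  qed
qed

theorem right_pq_baer_ore_extension:
  assumes C: "cond_C \<sigma>" and pq: "right_pq_baer (*) (UNIV :: 'a set)"
    and SB: "S_left \<subseteq> (B_central :: 'a set)"
  shows "right_pq_baer (ore_mult \<sigma> \<delta>) (UNIV :: 'a poly set)"
  unfolding right_pq_baer_def ore_mult_eq_omult
proof (intro ballI)
  fix p :: "'a poly"
  obtain e where eB: "e \<in> B_central"
    and e: "\<And>t. (\<forall>i\<le>degree p. \<forall>s. coeff p i * s * t = 0) \<longleftrightarrow> e * t = t"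
    using right_pq_baer_annihilator_central_finite[OF pq SB, where a="coeff p" and n="degree p"] by blast
  have ee: "e * e = e" and ce: "\<And>r. e * r = r * e" using B_centralD[OF eB] by blast+
  note e_fixed = B_central_sigma_delta[OF C eB]
  have "coeff p i * e = 0" for i
    using e[of e] ee by (cases "i \<le> degree p") (metis mult_1_right, simp add: coeff_eq_0)
  then have pe: "rmult e p = 0" by (intro poly_eqI) simp
  have "t \<in> {t \<in> UNIV. \<forall>s\<in>UNIV. p \<star> s \<star> t = 0} \<longleftrightarrow> t \<in> {[:e:] \<star> r |r. r \<in> UNIV}" for t
  proof
    assume "t \<in> {t \<in> UNIV. \<forall>s\<in>UNIV. p \<star> s \<star> t = 0}"
    then have "p \<star> lmult r t = 0" for r
      using omult_assoc[of p "[:r:]" t] by (simp add: omult_const)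
    then have "e * coeff t j = coeff t j" for j
      using e coeffs_annihilate[OF C pq SB] by blast
    then have "t = [:e:] \<star> t" by (intro poly_eqI) (simp add: omult_const)
    then show "t \<in> {[:e:] \<star> r |r. r \<in> UNIV}" by blast
  next
    assume "t \<in> {[:e:] \<star> r |r. r \<in> UNIV}"
    then obtain r where t: "t = lmult e r" by (auto simp: omult_const)
    have "p \<star> s \<star> t = 0" for s
    proof -
      have "p \<star> s \<star> t = rmult e (p \<star> s) \<star> r"
        by (simp add: t omult_rmult_left[OF e_fixed])
      also have "\<dots> = p \<star> lmult e s \<star> r"
        by (subst rmult_omult[OF e_fixed]) (simp add: rmult_eq_lmult_central[OF allI[OF ce]])
      also have "\<dots> = rmult e p \<star> s \<star> r"
        by (simp add: omult_rmult_left[OF e_fixed])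
      finally show ?thesis by (simp add: pe)
    qed
    then show "t \<in> {t \<in> UNIV. \<forall>s\<in>UNIV. p \<star> s \<star> t = 0}" by simp
  qed
  moreover have "[:e:] \<star> [:e:] = [:e:]" by (simp add: omult_const lmult_const ee)
  ultimately show "\<exists>e'\<in>UNIV. e' \<star> e' = e' \<and>
      {t \<in> UNIV. \<forall>s\<in>UNIV. p \<star> s \<star> t = 0} = {e' \<star> r |r. r \<in> UNIV}"
    by blast
qed

subsection \<open>The hypotheses (i) and (iii)\<close>

lemma omult_linear_zero:
  assumes ee: "e * e = e" and ec: "e * c = c"
    and "c * \<sigma> e = 0" "c * \<delta> e = 0" "c * \<sigma> c = 0" "c * \<delta> c = 0"
  shows "[:e, - c:] \<star> [:1 - e, c:] = 0"
proof (rule poly_eqI)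
  fix k
  have "coeff ([:e, - c:] \<star> [:1 - e, c:]) k
      = e * coeff [:1 - e, c:] k - c * coeff (xmult [:1 - e, c:]) k"
    by (simp add: omult_linear)
  also have "\<dots> = 0"
  proof -
    consider "k = 0" | "k = 1" | "k = 2" | "k \<ge> 3" by linarith
    then show ?thesis
    proof cases
      case 1
      then show ?thesis using assms by (simp add: coeff_xmult ee right_diff_distrib delta_diff)
    next
      case 2
      then show ?thesis using assms by (simp add: coeff_xmult ec sigma_diff right_diff_distrib distrib_left)
    next
      case 3
      then show ?thesis using assms by (simp add: coeff_xmult numeral_2_eq_2)
    next
      case 4
      then show ?thesis by (simp add: coeff_xmult coeff_pCons split: nat.split)
    qed
  qed
  finally show "coeff ([:e, - c:] \<star> [:1 - e, c:]) k = coeff 0 k" by simp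
qed

text \<open>For \<open>c = e r (1 - e)\<close> one has \<open>(e - c x)((1 - e) + c x) = 0\<close>, and the
skew Armendariz condition turns this into \<open>e \<cdot> c x = 0\<close>, i.e. \<open>c = 0\<close>.\<close>
lemma skew_armendariz_S_left_subset_B_central:
  assumes A: "skew_armendariz \<sigma> \<delta>" and C: "cond_C \<sigma>"
  shows "S_left \<subseteq> (B_central :: 'a set)"
proof
  fix e :: 'a assume eS: "e \<in> S_left"
  have ee: "e * e = e" using S_leftD(1)[OF eS] .
  have "e * r = r * e" for r
  proof -
    define c where "c = e * r * (1 - e)"
    have cs: "c * \<sigma> e = 0" and cd: "c * \<delta> e = 0"
      using S_left_sigma[OF C eS] S_left_delta[OF C eS] by (simp_all add: c_def mult.assoc)
    have "c * \<sigma> c = (c * \<sigma> e) * (\<sigma> r * \<sigma> (1 - e))"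
      by (simp add: c_def sigma_mult mult.assoc)
    then have csc: "c * \<sigma> c = 0" using cs by simp
    have "c * \<delta> c = (c * \<sigma> e) * \<delta> (r * (1 - e)) + (c * \<delta> e) * (r * (1 - e))"
      by (simp add: c_def mult.assoc delta_mult distrib_left)
    then have cdc: "c * \<delta> c = 0" using cs cd by simp
    have ec: "e * c = c" by (simp add: c_def ee flip: mult.assoc)
    have "ore_mult \<sigma> \<delta> [:e, - c:] [:1 - e, c:] = 0"
      using omult_linear_zero[OF ee ec cs cd csc cdc] by (simp add: ore_mult_eq_omult)
    then have "ore_mult \<sigma> \<delta> (monom (coeff [:e, - c:] 0) 0) (monom (coeff [:1 - e, c:] 1) 1) = 0"
      using A unfolding skew_armendariz_def by blast
    then have "coeff (lmult e (monom c 1)) 1 = 0"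
      by (simp add: ore_mult_eq_omult monom_0 omult_const)
    then have "c = 0" using ec by simp
    then have "e * r = e * r * e" by (simp add: c_def right_diff_distrib)
    then show ?thesis using S_leftD(2)[OF eS, of r] by (rule trans)
  qed
  then show "e \<in> B_central" using ee unfolding B_central_def mem_Collect_eq by blast
qed

lemma sigma_rigid_reduced:
  fixes a :: 'a
  assumes R: "sigma_rigid \<sigma>" and "a * a = 0"
  shows "a = 0"
proof -
  have rigid: "\<And>b. b * \<sigma> b = 0 \<Longrightarrow> b = 0" using R unfolding sigma_rigid_def by blast
  have "(a * \<sigma> a) * \<sigma> (a * \<sigma> a) = a * \<sigma> (a * a) * \<sigma> (\<sigma> a)"
    by (simp add: sigma_mult mult.assoc)
  also have "\<dots> = 0" using assms(2) by simp
  finally have "a * \<sigma> a = 0" by (rule rigid)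
  then show ?thesis by (rule rigid)
qed

lemma sigma_rigid_cond_C:
  assumes R: "sigma_rigid \<sigma>"
  shows "cond_C \<sigma>"
  unfolding cond_C_def
proof (intro allI impI)
  fix a b :: 'a assume ab: "a * \<sigma> b = 0"
  have "(b * a) * \<sigma> (b * a) = b * (a * \<sigma> b) * \<sigma> a" by (simp add: sigma_mult mult.assoc)
  then have "(b * a) * \<sigma> (b * a) = 0" using ab by simp
  then have "b * a = 0" using R unfolding sigma_rigid_def by blast
  with sigma_rigid_reduced[OF R] show "a * b = 0" by (rule reduced_mult_commute_zero)
qed

end

theorem corollary3p4:
  fixes \<sigma> \<delta> :: "'a::ring_1 \<Rightarrow> 'a"
  assumes "ring_endo \<sigma>"
    and "sigma_derivation \<sigma> \<delta>"
    and "right_pq_baer (*) (UNIV :: 'a set)"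
    and "(skew_armendariz \<sigma> \<delta> \<and> cond_C \<sigma>)
         \<or> ((S_left :: 'a set) = B_central \<and>
            (\<forall>e\<in>B_central. \<forall>r. \<exists>s. \<sigma> (r * e) = s * e) \<and> cond_C \<sigma>)
         \<or> sigma_rigid \<sigma>"
  shows "right_pq_baer (ore_mult \<sigma> \<delta>) (UNIV :: 'a poly set)"
proof -
  interpret ore_extension \<sigma> \<delta> using assms(1,2) by (rule ore_extension.intro)
  have "cond_C \<sigma> \<and> S_left \<subseteq> (B_central :: 'a set)"
    using assms(4) skew_armendariz_S_left_subset_B_central sigma_rigid_cond_C
      reduced_S_left_subset_B_central sigma_rigid_reduced by blast
  then show ?thesis using right_pq_baer_ore_extension assms(3) by blast
qed

end
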